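(* Let $M$ be a distance-based tree reconstruction method and suppose that for each $n$ it has $l_\infty$ safety radius $\rho_n>0$ on binary trees with $n$ leaves. Then for every $\eta>0$ and every $n$ there is $s_n>0$ such that $M$ has $\eta$-stochastic safety radius (at least) $s_n$ for all binary phylogenetic trees with $n$ leaves. Moreover, $s_n$ can be taken arbitrarily close to $\frac12\rho_n$ as $n\to\infty$: for every $\eta>0$ and every $\theta\in(0,1)$ there exists $N$ such that for all $n\ge N$, $M$ has $\eta$-stochastic safety radius at least $\theta\cdot\frac12\rho_n$ for all binary phylogenetic trees with $n$ leaves.
   Context: A phylogenetic $X$-tree is a tree whose leaves are bijectively labelled by the finite set $X$ and whose interior vertices have degree at least 3; it is binary if all interior vertices have degree 3. For a binary phylogenetic $X$-tree $T$ with positive edge lengths $w$, $d_{(T,w)}$ denotes the tree metric (path-length distance between leaves) and $w_{\min}$ the minimum length of an interior (non-pendant) edge. A distance-based tree reconstruction method $M$ assigns (measurably) to every finite set $X$ and every dissimilarity map $\delta:\{\{x,y\}:x\ne y\in X\}\to\mathbb{R}$ a phylogenetic $X$-tree topology $M(\delta)$; $M(\delta)=T$ means equality of (unrooted) topologies. $M$ has $l_\infty$ safety radius $\rho_n$ (on $n$-leaf trees) if for every binary phylogenetic $X$-tree $T$ with $|X|=n$ and positive edge lengths $w$, and every dissimilarity map $\delta$ on $X$, $\max_{x\ne y}|\delta(x,y)-d_{(T,w)}(x,y)|<\rho_n w_{\min}$ implies $M(\delta)=T$. Random errors model: $\delta(x,y)=d_{(T,w)}(x,y)+\epsilon_{xy}$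 with the $\epsilon_{xy}$ (one per unordered pair) independent $N(0,\sigma^2)$, where $\sigma^2=c^2/\log(n)$ for some $c\ne 0$ and $n=|X|$ ($\log$ the natural logarithm). For $\eta>0$, $M$ has $\eta$-stochastic safety radius $s$ (on $n$-leaf trees) if for every binary phylogenetic $X$-tree $T$ with $|X|=n$ and positive edge lengths, and $\delta$ drawn from the random errors model with parameter $c$, $c<s\cdot w_{\min}$ implies $\mathbb{P}(M(\delta)=T)\ge 1-\eta$. *)

theory Defs
  imports "HOL-Probability.Probability"
begin

text \<open>Phylogenetic X-trees are encoded as finite graphs (V, E) whose vertices have type
  'a + nat: the leaf labelled x is the vertex Inl x, interior vertices are Inr k.
  Edges are 2-element vertex sets.\<close>

type_synonym 'a vert = "'a + nat"
type_synonym 'a ptree = "'a vert set \<times> 'a vert set set"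

definition degree :: "'v set set \<Rightarrow> 'v \<Rightarrow> nat" where
  "degree E v = card {e \<in> E. v \<in> e}"

definition is_path :: "'v set set \<Rightarrow> 'v list \<Rightarrow> 'v \<Rightarrow> 'v \<Rightarrow> bool" where
  "is_path E p u v \<longleftrightarrow> p \<noteq> [] \<and> hd p = u \<and> last p = v \<and> distinct p \<and>
     (\<forall>i. Suc i < length p \<longrightarrow> {p ! i, p ! Suc i} \<in> E)"

definition path_edges :: "'v list \<Rightarrow> 'v set set" where
  "path_edges p = {{p ! i, p ! Suc i} | i. Suc i < length p}"

definition has_cycle :: "'v set set \<Rightarrow> bool" where
  "has_cycle E \<longleftrightarrow> (\<exists>p. 3 \<le> length p \<and> distinct p \<and>
     (\<forall>i. Suc i < length p \<longrightarrow> {p ! i, p ! Suc i} \<in> E) \<and> {last p, hd p} \<in> E)"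

definition phylo_tree :: "'a set \<Rightarrow> 'a ptree \<Rightarrow> bool" where
  "phylo_tree X T \<longleftrightarrow> (case T of (V, E) \<Rightarrow>
     finite V \<and>
     E \<subseteq> {{u, v} | u v. u \<in> V \<and> v \<in> V \<and> u \<noteq> v} \<and>
     (\<forall>u\<in>V. \<forall>v\<in>V. \<exists>p. is_path E p u v) \<and>
     \<not> has_cycle E \<and>
     {v \<in> V. degree E v \<le> 1} = Inl ` X \<and>
     V - Inl ` X \<subseteq> range Inr \<and>
     (\<forall>v \<in> V - Inl ` X. 3 \<le> degree E v))"

definition binary_phylo_tree :: "'a set \<Rightarrow> 'a ptree \<Rightarrow> bool" where
  "binary_phylo_tree X T \<longleftrightarrow> phylo_tree X T \<and>
     (\<forall>v \<in> fst T - Inl ` X. degree (snd T) v = 3)"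

definition same_topology :: "'a set \<Rightarrow> 'a ptree \<Rightarrow> 'a ptree \<Rightarrow> bool" where
  "same_topology X T1 T2 \<longleftrightarrow> (\<exists>f. bij_betw f (fst T1) (fst T2) \<and>
     (\<forall>x\<in>X. f (Inl x) = Inl x) \<and>
     (\<forall>u\<in>fst T1. \<forall>v\<in>fst T1. {u, v} \<in> snd T1 \<longleftrightarrow> {f u, f v} \<in> snd T2))"

definition tree_metric :: "'v set set \<Rightarrow> ('v set \<Rightarrow> real) \<Rightarrow> 'v \<Rightarrow> 'v \<Rightarrow> real" where
  "tree_metric E w u v = (\<Sum>e \<in> path_edges (THE p. is_path E p u v). w e)"

text \<open>Minimum length of an interior (non-pendant) edge; +infinity if there is none.\<close>
definition wmin :: "'a set \<Rightarrow> 'a ptree \<Rightarrow> ('a vert set \<Rightarrow> real) \<Rightarrow> ereal" where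
  "wmin X T w = (INF e \<in> {e \<in> snd T. e \<inter> Inl ` X = {}}. ereal (w e))"

text \<open>Unordered pairs of distinct elements of X; dissimilarity maps are functions on them.\<close>
definition pairs :: "'a set \<Rightarrow> 'a set set" where
  "pairs X = {{x, y} | x y. x \<in> X \<and> y \<in> X \<and> x \<noteq> y}"

definition dissim_space :: "'a set \<Rightarrow> ('a set \<Rightarrow> real) measure" where
  "dissim_space X = (\<Pi>\<^sub>M p \<in> pairs X. (borel :: real measure))"

definition pair_dist :: "'a ptree \<Rightarrow> ('a vert set \<Rightarrow> real) \<Rightarrow> 'a set \<Rightarrow> real" where
  "pair_dist T w p = (THE r. \<exists>x y. p = {x, y} \<and> r = tree_metric (snd T) w (Inl x) (Inl y))"

definition recon_method :: "('a set \<Rightarrow> ('a set \<Rightarrow> real) \<Rightarrow> 'a ptree) \<Rightarrow> bool" where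
  "recon_method M \<longleftrightarrow>
     (\<forall>X \<delta>. finite X \<and> \<delta> \<in> space (dissim_space X) \<longrightarrow> phylo_tree X (M X \<delta>)) \<and>
     (\<forall>X T. finite X \<longrightarrow>
        {\<delta> \<in> space (dissim_space X). same_topology X (M X \<delta>) T} \<in> sets (dissim_space X))"

definition linf_safety_radius ::
  "('a set \<Rightarrow> ('a set \<Rightarrow> real) \<Rightarrow> 'a ptree) \<Rightarrow> nat \<Rightarrow> real \<Rightarrow> bool" where
  "linf_safety_radius M n \<rho> \<longleftrightarrow>
     (\<forall>X T w \<delta>. finite X \<and> card X = n \<and> binary_phylo_tree X T \<and>
        (\<forall>e \<in> snd T. 0 < w e) \<and> \<delta> \<in> space (dissim_space X) \<and>
        (\<forall>x\<in>X. \<forall>y\<in>X. x \<noteq> y \<longrightarrow>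
           ereal \<bar>\<delta> {x, y} - tree_metric (snd T) w (Inl x) (Inl y)\<bar> < ereal \<rho> * wmin X T w)
        \<longrightarrow> same_topology X (M X \<delta>) T)"

definition noise :: "'a set \<Rightarrow> real \<Rightarrow> ('a set \<Rightarrow> real) measure" where
  "noise X c = (\<Pi>\<^sub>M p \<in> pairs X.
      density lborel (normal_density 0 (sqrt (c\<^sup>2 / ln (real (card X))))))"

definition prob_correct ::
  "('a set \<Rightarrow> ('a set \<Rightarrow> real) \<Rightarrow> 'a ptree) \<Rightarrow> 'a set \<Rightarrow> 'a ptree \<Rightarrow> ('a vert set \<Rightarrow> real)
     \<Rightarrow> real \<Rightarrow> real" where
  "prob_correct M X T w c = measure (noise X c)
     {\<epsilon> \<in> space (noise X c).
        same_topology X (M X (\<lambda>p \<in> pairs X. pair_dist T w p + \<epsilon> p)) T}"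

definition stochastic_safety_radius ::
  "('a set \<Rightarrow> ('a set \<Rightarrow> real) \<Rightarrow> 'a ptree) \<Rightarrow> real \<Rightarrow> nat \<Rightarrow> real \<Rightarrow> bool" where
  "stochastic_safety_radius M \<eta> n s \<longleftrightarrow>
     (\<forall>X T w c. finite X \<and> card X = n \<and> binary_phylo_tree X T \<and>
        (\<forall>e \<in> snd T. 0 < w e) \<and> 0 < c \<and> ereal c < ereal s * wmin X T w
        \<longrightarrow> 1 - \<eta> \<le> prob_correct M X T w c)"

end

theory Submission
  imports Defs "HOL-Real_Asymp.Real_Asymp"
begin

text \<open>By the l-infinity safety radius, M returns the true tree as soon as every pairwise error
  is below \<open>\<rho>\<^sub>n wmin\<close>. If \<open>c < s wmin\<close> it suffices that every error is below
  \<open>\<rho>\<^sub>n c / s\<close>; since \<open>\<sigma>\<^sup>2 = c\<^sup>2 / log n\<close>, the Gaussian tail bound and a union bound over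
  fewer than \<open>n\<^sup>2\<close> pairs bound the failure probability by
  \<open>2 n\<^sup>2 exp (-\<rho>\<^sub>n\<^sup>2 log n / (2 s\<^sup>2))\<close>, independently of the tree. For fixed n this tends to
  0 as \<open>s \<rightarrow> 0\<close>; for \<open>s = \<theta> \<rho>\<^sub>n / 2\<close> it equals \<open>2 n\<^bsup>2 - 2/\<theta>\<^sup>2\<^esup>\<close>, which
  tends to 0 as \<open>n \<rightarrow> \<infinity>\<close> because \<open>\<theta> < 1\<close>.
  As the errors are indexed by unordered leaf pairs, this also needs the tree metric to be
  symmetric, i.e. paths in a tree to be unique.\<close>

section \<open>Paths in acyclic graphs\<close>

abbreviation is_walk :: "'v set set \<Rightarrow> 'v list \<Rightarrow> bool" where
  "is_walk E \<equiv> successively (\<lambda>x y. {x, y} \<in> E)"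

lemma is_path_iff_walk:
  "is_path E p u v \<longleftrightarrow> p \<noteq> [] \<and> hd p = u \<and> last p = v \<and> distinct p \<and> is_walk E p"
  by (auto simp: is_path_def successively_conv_nth)

lemma is_path_prefix:
  assumes "is_path E p u v" "i < length p"
  shows "is_path E (take (Suc i) p) u (p ! i)"
proof -
  have "is_walk E (take (Suc i) p)"
    using assms(1) successively_append_iff[of _ "take (Suc i) p" "drop (Suc i) p"]
    by (simp add: is_path_iff_walk)
  moreover have "last (take (Suc i) p) = p ! i"
    using assms(2) by (simp add: take_Suc_conv_app_nth)
  ultimately show ?thesis
    using assms(1) by (simp add: is_path_iff_walk)
qed

lemma is_path_Cons:
  assumes "is_path E (u # p) u v" "p \<noteq> []"
  shows "is_path E p (hd p) v" "{u, hd p} \<in> E" "u \<notin> set p"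
  using assms by (auto simp: is_path_iff_walk successively_Cons)

lemma is_path_rev: "is_path E p u v \<Longrightarrow> is_path E (rev p) v u"
  by (auto simp: is_path_iff_walk hd_rev last_rev insert_commute)

lemma has_cycle_if_walk_closes_path:
  assumes "is_path E p a b" "r \<noteq> []" "distinct r" "is_walk E r"
    and "{last r, a} \<in> E" "{hd r, b} \<in> E" "set r \<inter> set p = {}" "3 \<le> length r + length p"
  shows "has_cycle E"
proof -
  let ?c = "r @ p"
  have "is_walk E ?c" "distinct ?c" "hd ?c = hd r" "last ?c = b" "p \<noteq> []"
    using assms by (auto simp: is_path_iff_walk successively_append_iff)
  then show ?thesis
    unfolding has_cycle_def using assms(6,8)
    by (intro exI[of _ ?c]) (auto simp: successively_conv_nth insert_commute)
qed

text \<open>Follow q from b until it first meets p; the visited vertices, prepended to r, close up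
  with a piece of p to a cycle.\<close>
lemma has_cycle_if_paths_joined:
  assumes "is_path E p a v" "is_path E q b v" "r \<noteq> []" "distinct r" "is_walk E r"
    and "{last r, a} \<in> E" "{hd r, b} \<in> E" "set r \<inter> set p = {}" "set r \<inter> set q = {}"
    and "2 \<le> length r \<or> a \<noteq> b"
  shows "has_cycle E"
  using assms(2-)
proof (induction q arbitrary: b r)
  case Nil
  then show ?case by (simp add: is_path_def)
next
  case (Cons b' q)
  have b: "b' = b" using Cons.prems(1) by (simp add: is_path_def)
  show ?case
  proof (cases "b \<in> set p")
    case True
    then obtain i where i: "i < length p" "p ! i = b" by (auto simp: in_set_conv_nth)
    have prefix: "is_path E (take (Suc i) p) a b"
      using is_path_prefix[OF assms(1) i(1)] i(2) by simp
    have "set r \<inter> set (take (Suc i) p) = {}"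
      using Cons.prems(7) set_take_subset[of "Suc i" p] by blast
    moreover have "i \<noteq> 0" if "a \<noteq> b"
      using that i assms(1) by (cases i) (auto simp: is_path_def hd_conv_nth)
    then have "3 \<le> length r + length (take (Suc i) p)"
      using Cons.prems(2,9) i(1) by (cases r) auto
    ultimately show ?thesis
      by (rule has_cycle_if_walk_closes_path[OF prefix Cons.prems(2-6)])
  next
    case False
    have "q \<noteq> []"
      using Cons.prems(1) assms(1) False b by (auto simp: is_path_def)
    then have q: "is_path E q (hd q) v" "{b, hd q} \<in> E" "b \<notin> set q"
      using is_path_Cons[of E b q v] Cons.prems(1) b by auto
    show ?thesis
    proof (rule Cons.IH[OF q(1), of "b # r"])
      show "distinct (b # r)" "set (b # r) \<inter> set p = {}" "set (b # r) \<inter> set q = {}"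
        using Cons.prems(3,7,8) False q(3) b by auto
      show "is_walk E (b # r)"
        using Cons.prems(2,4,6) by (simp add: successively_Cons insert_commute)
    qed (use Cons.prems(2,5) q(2) in \<open>auto simp: Suc_le_eq\<close>)
  qed
qed

lemma is_path_unique:
  assumes "\<not> has_cycle E" "is_path E p u v" "is_path E q u v"
  shows "p = q"
  using assms(2,3)
proof (induction p arbitrary: q u)
  case Nil
  then show ?case by (simp add: is_path_def)
next
  case (Cons x p)
  obtain q' where q: "q = u # q'" "x = u"
    using Cons.prems by (cases q) (auto simp: is_path_def)
  have last_not_u: "last p' \<noteq> u" if "is_path E (u # p') u v" "p' \<noteq> []" for p'
    using is_path_Cons[OF that] that(2) by (auto dest: last_in_set)
  consider (single) "p = []" "q' = []" | (longer) "p \<noteq> []" "q' \<noteq> []"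
    using last_not_u Cons.prems q by (cases "p = []"; cases "q' = []") (auto simp: is_path_def)
  then show ?case
  proof cases
    case longer
    note p = is_path_Cons[OF Cons.prems(1)[unfolded q(2)] longer(1)]
    note q' = is_path_Cons[OF Cons.prems(2)[unfolded q(1)] longer(2)]
    have "hd p = hd q'"
    proof (rule ccontr)
      assume "hd p \<noteq> hd q'"
      then have "has_cycle E"
        using has_cycle_if_paths_joined[OF p(1) q'(1), of "[u]"] p(2,3) q'(2,3) by auto
      with assms(1) show False ..
    qed
    then show ?thesis using Cons.IH[OF p(1)] q'(1) q by simp
  qed (use q in simp)
qed

lemma path_edges_rev: "path_edges (rev p) = path_edges p"
proof -
  have "path_edges (rev p) \<subseteq> path_edges p" for p :: "'a list"
  proof
    fix e assume "e \<in> path_edges (rev p)"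
    then obtain i where i: "Suc i < length p" "e = {rev p ! i, rev p ! Suc i}"
      by (auto simp: path_edges_def)
    define j where "j = length p - Suc (Suc i)"
    have "Suc j < length p" "e = {p ! j, p ! Suc j}"
      using i by (auto simp: j_def rev_nth Suc_diff_Suc insert_commute)
    then show "e \<in> path_edges p" by (auto simp: path_edges_def)
  qed
  from this[of p] this[of "rev p"] show ?thesis by simp
qed

lemma tree_metric_commute:
  assumes "\<not> has_cycle E" "is_path E p u v"
  shows "tree_metric E w u v = tree_metric E w v u"
proof -
  have "(THE p. is_path E p u v) = p" "(THE p. is_path E p v u) = rev p"
    using is_path_unique[OF assms(1)] assms(2) is_path_rev[OF assms(2)] by (blast intro: the_equality)+
  then show ?thesis by (simp add: tree_metric_def path_edges_rev)
qed

lemma pair_dist_eq_tree_metric: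
  assumes "phylo_tree X T" "x \<in> X" "y \<in> X"
  shows "pair_dist T w {x, y} = tree_metric (snd T) w (Inl x) (Inl y)"
proof -
  obtain V E where T: "T = (V, E)" by (cases T)
  have acyclic: "\<not> has_cycle E" and "\<forall>u\<in>V. \<forall>v\<in>V. \<exists>p. is_path E p u v" "Inl ` X \<subseteq> V"
    using assms(1) unfolding phylo_tree_def T by auto
  then obtain p where "is_path E p (Inl x) (Inl y)"
    using assms(2,3) by blast
  note commute = tree_metric_commute[OF acyclic this, of w]
  show ?thesis
    unfolding pair_dist_def T snd_conv
  proof (rule the_equality)
    fix r assume "\<exists>x' y'. {x, y} = {x', y'} \<and> r = tree_metric E w (Inl x') (Inl y')"
    with commute show "r = tree_metric E w (Inl x) (Inl y)"
      by (auto simp: doubleton_eq_iff)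
  qed blast
qed

section \<open>Gaussian tails\<close>

lemma exp_tail_split:
  fixes r x \<sigma> :: real
  assumes "0 \<le> r" "r \<le> \<bar>x\<bar>"
  shows "exp (-(x\<^sup>2) / (2 * \<sigma>\<^sup>2)) \<le>
    exp (-(r\<^sup>2) / (2 * \<sigma>\<^sup>2)) * (exp (-((x - r)\<^sup>2) / (2 * \<sigma>\<^sup>2)) + exp (-((x + r)\<^sup>2) / (2 * \<sigma>\<^sup>2)))"
proof -
  have "\<exists>y \<in> {x - r, x + r}. r\<^sup>2 + y\<^sup>2 \<le> x\<^sup>2"
  proof (cases "0 \<le> x")
    case True
    then have "0 \<le> r * (x - r)" using assms by simp
    then show ?thesis by (auto simp: power2_eq_square algebra_simps)
  next
    case False
    then have "r * (x + r) \<le> 0" using assms by (simp add: mult_nonneg_nonpos)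
    then show ?thesis by (auto simp: power2_eq_square algebra_simps)
  qed
  then obtain y where y: "y \<in> {x - r, x + r}" "r\<^sup>2 + y\<^sup>2 \<le> x\<^sup>2" by blast
  have "(r\<^sup>2 + y\<^sup>2) / (2 * \<sigma>\<^sup>2) \<le> x\<^sup>2 / (2 * \<sigma>\<^sup>2)"
    using y(2) by (intro divide_right_mono) auto
  then have "exp (-(x\<^sup>2) / (2 * \<sigma>\<^sup>2)) \<le> exp (-(r\<^sup>2) / (2 * \<sigma>\<^sup>2) + -(y\<^sup>2) / (2 * \<sigma>\<^sup>2))"
    by (simp add: add_divide_distrib)
  also have "\<dots> \<le> exp (-(r\<^sup>2) / (2 * \<sigma>\<^sup>2)) * (exp (-((x - r)\<^sup>2) / (2 * \<sigma>\<^sup>2)) + exp (-((x + r)\<^sup>2) / (2 * \<sigma>\<^sup>2)))"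
    using y(1) by (auto simp: exp_add[symmetric] distrib_left)
  finally show ?thesis .
qed

lemma normal_density_tail_le:
  assumes "0 \<le> r" "r \<le> \<bar>x\<bar>"
  shows "normal_density 0 \<sigma> x \<le>
    exp (-(r\<^sup>2) / (2 * \<sigma>\<^sup>2)) * (normal_density r \<sigma> x + normal_density (-r) \<sigma> x)"
  using divide_right_mono[OF exp_tail_split[OF assms, of \<sigma>], of "sqrt (2 * pi * \<sigma>\<^sup>2)"]
  unfolding normal_density_def by (simp add: add_divide_distrib[symmetric])

lemma emeasure_normal_tail_le:
  fixes \<sigma> r :: real
  assumes "0 < \<sigma>" "0 \<le> r"
  shows "emeasure (density lborel (normal_density 0 \<sigma>)) {x. r \<le> \<bar>x\<bar>}
    \<le> ennreal (2 * exp (-(r\<^sup>2) / (2 * \<sigma>\<^sup>2)))"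
proof -
  define e where "e = exp (-(r\<^sup>2) / (2 * \<sigma>\<^sup>2))"
  have e: "0 \<le> e" by (simp add: e_def)
  have integral_one: "(\<integral>\<^sup>+ x. ennreal (normal_density \<mu> \<sigma> x) \<partial>lborel) = 1" for \<mu>
    using prob_space.emeasure_space_1[OF prob_space_normal_density[OF assms(1)]]
    by (simp add: emeasure_density)
  have pointwise: "normal_density 0 \<sigma> x * indicator {x. r \<le> \<bar>x\<bar>} x
      \<le> e * (normal_density r \<sigma> x + normal_density (-r) \<sigma> x)" for x
    using normal_density_tail_le[OF assms(2), of x \<sigma>] e by (simp add: e_def indicator_def)
  have "emeasure (density lborel (normal_density 0 \<sigma>)) {x. r \<le> \<bar>x\<bar>}
      = (\<integral>\<^sup>+ x. ennreal (normal_density 0 \<sigma> x * indicator {x. r \<le> \<bar>x\<bar>} x) \<partial>lborel)"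
    by (simp add: emeasure_density ennreal_mult' ennreal_indicator)
  also have "\<dots> \<le> (\<integral>\<^sup>+ x. ennreal (e * (normal_density r \<sigma> x + normal_density (-r) \<sigma> x)) \<partial>lborel)"
    by (intro nn_integral_mono ennreal_leI pointwise)
  also have "\<dots> = ennreal e * ((\<integral>\<^sup>+ x. ennreal (normal_density r \<sigma> x) \<partial>lborel)
      + (\<integral>\<^sup>+ x. ennreal (normal_density (-r) \<sigma> x) \<partial>lborel))"
    using e by (simp add: ennreal_mult ennreal_plus nn_integral_cmult nn_integral_add)
  also have "\<dots> = ennreal (2 * e)"
    using e by (simp add: integral_one ennreal_mult' mult.commute)
  finally show ?thesis by (simp add: e_def)
qed

lemma (in product_prob_space) measure_PiM_ex_component_le:
  assumes "finite I" "\<And>i. i \<in> I \<Longrightarrow> A i \<in> sets (M i)"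
  shows "measure (Pi\<^sub>M I M) {x \<in> space (Pi\<^sub>M I M). \<exists>i\<in>I. x i \<in> A i}
    \<le> (\<Sum>i\<in>I. measure (M i) (A i))"
proof -
  define C where "C i = {x \<in> space (Pi\<^sub>M I M). x i \<in> A i}" for i
  have C: "C i \<in> sets (Pi\<^sub>M I M)" "measure (Pi\<^sub>M I M) (C i) = measure (M i) (A i)" if "i \<in> I" for i
    using emeasure_PiM_Collect_single[OF that assms(2)[OF that]] sets_Collect_single[of i I "A i" M]
      that assms(2)[OF that] by (simp_all add: C_def measure_def)
  have "measure (Pi\<^sub>M I M) {x \<in> space (Pi\<^sub>M I M). \<exists>i\<in>I. x i \<in> A i} = measure (Pi\<^sub>M I M) (\<Union>i\<in>I. C i)"
    by (rule arg_cong[where f="measure _"]) (auto simp: C_def)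
  also have "\<dots> \<le> (\<Sum>i\<in>I. measure (Pi\<^sub>M I M) (C i))"
    using C(1) assms(1) by (intro finite_measure_subadditive_finite) auto
  also have "\<dots> = (\<Sum>i\<in>I. measure (M i) (A i))"
    using C(2) by simp
  finally show ?thesis .
qed

lemma measure_gaussian_errors_below:
  fixes I :: "'i set" and \<sigma> r :: real
  defines "N \<equiv> \<Pi>\<^sub>M i\<in>I. density lborel (normal_density 0 \<sigma>)"
  assumes "finite I" "0 < \<sigma>" "0 \<le> r"
  shows "1 - real (card I) * (2 * exp (-(r\<^sup>2) / (2 * \<sigma>\<^sup>2)))
    \<le> measure N {\<epsilon> \<in> space N. \<forall>i\<in>I. \<bar>\<epsilon> i\<bar> < r}"
proof -
  interpret G: prob_space "density lborel (normal_density 0 \<sigma>)"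
    by (rule prob_space_normal_density[OF assms(3)])
  interpret product_prob_space "\<lambda>_. density lborel (normal_density 0 \<sigma>)" I
    by unfold_locales
  let ?tail = "{x::real. r \<le> \<bar>x\<bar>}"
  let ?bad = "{\<epsilon> \<in> space N. \<exists>i\<in>I. \<epsilon> i \<in> ?tail}"
  have "G.prob ?tail \<le> 2 * exp (-(r\<^sup>2) / (2 * \<sigma>\<^sup>2))"
    using emeasure_normal_tail_le[OF assms(3,4)] by (simp add: G.emeasure_eq_measure)
  then have "measure N ?bad \<le> real (card I) * (2 * exp (-(r\<^sup>2) / (2 * \<sigma>\<^sup>2)))"
    using measure_PiM_ex_component_le[OF assms(2), of "\<lambda>_. ?tail"] sum_bounded_above[of I]
    unfolding N_def by fastforce
  moreover have "{\<epsilon> \<in> space N. \<forall>i\<in>I. \<bar>\<epsilon> i\<bar> < r} = space N - ?bad"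
    by (auto simp: not_le)
  moreover have "?bad \<in> sets N"
    using assms(2) unfolding N_def by measurable
  ultimately show ?thesis
    unfolding N_def by (simp add: prob_compl)
qed

section \<open>From l-infinity to stochastic safety radii\<close>

lemma pairs_subset_image: "pairs X \<subseteq> (\<lambda>(x, y). {x, y}) ` (X \<times> X)"
  by (auto simp: pairs_def image_iff)

lemma finite_pairs: "finite X \<Longrightarrow> finite (pairs X)"
  by (rule finite_surj[OF finite_cartesian_product pairs_subset_image])

lemma card_pairs_le:
  assumes "finite X"
  shows "card (pairs X) \<le> (card X)\<^sup>2"
proof -
  have "card (pairs X) \<le> card ((\<lambda>(x, y). {x, y}) ` (X \<times> X))"
    using assms by (intro card_mono pairs_subset_image) auto
  also have "\<dots> \<le> card (X \<times> X)"
    using assms by (intro card_image_le) auto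
  finally show ?thesis
    by (simp add: card_cartesian_product power2_eq_square)
qed

lemma two_le_card_if_pairs_nonempty:
  assumes "finite X" "pairs X \<noteq> {}"
  shows "2 \<le> card X"
proof -
  obtain x y where "x \<in> X" "y \<in> X" "x \<noteq> y"
    using assms(2) by (auto simp: pairs_def)
  then show ?thesis
    using card_mono[OF assms(1), of "{x, y}"] by simp
qed

lemma sets_noise: "sets (noise X c) = sets (dissim_space X)"
  unfolding noise_def dissim_space_def by (rule sets_PiM_cong) simp_all

lemma prob_space_noise:
  assumes "finite X" "c \<noteq> 0"
  shows "prob_space (noise X c)"
  unfolding noise_def
proof (rule prob_space_PiM)
  fix p assume "p \<in> pairs X"
  then have "1 < real (card X)"
    using two_le_card_if_pairs_nonempty[OF assms(1)] by fastforce
  then show "prob_space (density lborel (normal_density 0 (sqrt (c\<^sup>2 / ln (real (card X))))))"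
    using assms(2) by (intro prob_space_normal_density) simp
qed

lemma ereal_scaled_less:
  assumes "0 < s" "0 < \<rho>" "ereal c < ereal s * W"
  shows "ereal (\<rho> * c / s) < ereal \<rho> * W"
  using assms by (cases W) (auto simp: field_simps)

text \<open>The level \<open>\<rho> c / s\<close> lies below \<open>\<rho> wmin\<close> whenever \<open>c < s wmin\<close>, but unlike
  \<open>\<rho> wmin\<close> it gives a Gaussian tail bound that does not depend on the edge lengths.\<close>
lemma same_topology_if_errors_below:
  assumes lin: "linf_safety_radius M n \<rho>" and "0 < \<rho>"
    and X: "finite X" "card X = n" and T: "binary_phylo_tree X T" "\<forall>e\<in>snd T. 0 < w e"
    and "0 < s" "ereal c < ereal s * wmin X T w"
    and \<delta>: "\<delta> \<in> space (dissim_space X)" "\<forall>p\<in>pairs X. \<bar>\<delta> p - pair_dist T w p\<bar> < \<rho> * c / s"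
  shows "same_topology X (M X \<delta>) T"
proof -
  have "ereal \<bar>\<delta> {x, y} - tree_metric (snd T) w (Inl x) (Inl y)\<bar> < ereal \<rho> * wmin X T w"
    if "x \<in> X" "y \<in> X" "x \<noteq> y" for x y
  proof -
    have "phylo_tree X T"
      using T(1) by (simp add: binary_phylo_tree_def)
    then have "\<bar>\<delta> {x, y} - tree_metric (snd T) w (Inl x) (Inl y)\<bar> < \<rho> * c / s"
      using \<delta>(2) that by (auto simp: pairs_def pair_dist_eq_tree_metric[symmetric])
    then have "ereal \<bar>\<delta> {x, y} - tree_metric (snd T) w (Inl x) (Inl y)\<bar> < ereal (\<rho> * c / s)"
      by simp
    also have "\<dots> < ereal \<rho> * wmin X T w"
      using assms(2,7,8) by (intro ereal_scaled_less)
    finally show ?thesis .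
  qed
  then show ?thesis
    using X T \<delta>(1) by (intro lin[unfolded linf_safety_radius_def, rule_format, of X T w]) auto
qed

lemma measurable_perturbation:
  "(\<lambda>\<epsilon>. \<lambda>p\<in>pairs X. d p + \<epsilon> p) \<in> measurable (noise X c) (dissim_space X)"
  unfolding measurable_cong_sets[OF sets_noise refl] dissim_space_def by measurable

lemma sets_correct_event:
  assumes "recon_method M" "finite X"
  shows "{\<epsilon> \<in> space (noise X c). same_topology X (M X (\<lambda>p\<in>pairs X. d p + \<epsilon> p)) T}
    \<in> sets (noise X c)"
proof -
  define A where "A = {\<delta> \<in> space (dissim_space X). same_topology X (M X \<delta>) T}"
  have "A \<in> sets (dissim_space X)"
    using assms unfolding recon_method_def A_def by blast
  then have "(\<lambda>\<epsilon>. \<lambda>p\<in>pairs X. d p + \<epsilon> p) -` A \<inter> space (noise X c) \<in> sets (noise X c)"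
    by (rule measurable_sets[OF measurable_perturbation])
  moreover have "(\<lambda>\<epsilon>. \<lambda>p\<in>pairs X. d p + \<epsilon> p) -` A \<inter> space (noise X c)
      = {\<epsilon> \<in> space (noise X c). same_topology X (M X (\<lambda>p\<in>pairs X. d p + \<epsilon> p)) T}"
    using measurable_space[OF measurable_perturbation] by (auto simp: A_def)
  ultimately show ?thesis
    by simp
qed

lemma prob_correct_ge:
  assumes "recon_method M" "linf_safety_radius M n \<rho>" "0 < \<rho>"
    and X: "finite X" "card X = n" and T: "binary_phylo_tree X T" "\<forall>e\<in>snd T. 0 < w e"
    and "0 < c" "0 < s" "ereal c < ereal s * wmin X T w"
  shows "1 - real (card (pairs X)) * (2 * exp (-(\<rho>\<^sup>2 * ln (real n) / (2 * s\<^sup>2))))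
    \<le> prob_correct M X T w c"
proof -
  define r where "r = \<rho> * c / s"
  let ?\<Omega> = "noise X c"
  let ?small = "{\<epsilon> \<in> space ?\<Omega>. \<forall>p\<in>pairs X. \<bar>\<epsilon> p\<bar> < r}"
  interpret prob_space ?\<Omega>
    using \<open>0 < c\<close> by (intro prob_space_noise X(1)) simp
  have "?small \<subseteq> {\<epsilon> \<in> space ?\<Omega>. same_topology X (M X (\<lambda>p\<in>pairs X. pair_dist T w p + \<epsilon> p)) T}"
  proof (intro subsetI CollectI conjI)
    fix \<epsilon> assume "\<epsilon> \<in> ?small"
    then show "\<epsilon> \<in> space ?\<Omega>" "same_topology X (M X (\<lambda>p\<in>pairs X. pair_dist T w p + \<epsilon> p)) T"
      using measurable_space[OF measurable_perturbation, of \<epsilon> X c "pair_dist T w"]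
      by (auto simp: r_def intro!: same_topology_if_errors_below[OF assms(2,3) X T assms(9,10)])
  qed
  then have "prob ?small \<le> prob_correct M X T w c"
    unfolding prob_correct_def by (intro finite_measure_mono sets_correct_event assms(1) X(1))
  moreover have "1 - real (card (pairs X)) * (2 * exp (-(\<rho>\<^sup>2 * ln (real n) / (2 * s\<^sup>2))))
      \<le> prob ?small"
  proof (cases "pairs X = {}")
    case True
    then show ?thesis by (simp add: prob_space)
  next
    case False
    define \<sigma> where "\<sigma> = sqrt (c\<^sup>2 / ln (real n))"
    have "0 < ln (real n)"
      using two_le_card_if_pairs_nonempty[OF X(1) False] X(2) by simp
    then have "0 < \<sigma>" "r\<^sup>2 / (2 * \<sigma>\<^sup>2) = \<rho>\<^sup>2 * ln (real n) / (2 * s\<^sup>2)"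
      using \<open>0 < c\<close> \<open>0 < s\<close> by (simp_all add: \<sigma>_def r_def power_divide power_mult_distrib)
    moreover have "0 \<le> r"
      using \<open>0 < \<rho>\<close> \<open>0 < c\<close> \<open>0 < s\<close> by (simp add: r_def)
    ultimately show ?thesis
      using measure_gaussian_errors_below[OF finite_pairs[OF X(1)], of \<sigma> r] X(2)
      by (simp add: noise_def \<sigma>_def)
  qed
  ultimately show ?thesis
    by linarith
qed

text \<open>Union bound over the at most \<open>n\<^sup>2\<close> leaf pairs of the Gaussian tail at level \<open>\<rho> c / s\<close>,
  with \<open>\<sigma>\<^sup>2 = c\<^sup>2 / log n\<close>.\<close>
definition failure_bound :: "nat \<Rightarrow> real \<Rightarrow> real \<Rightarrow> real" where
  "failure_bound n \<rho> s = real n ^ 2 * (2 * exp (-(\<rho>\<^sup>2 * ln (real n) / (2 * s\<^sup>2))))"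

lemma stochastic_safety_radius_if_failure_bound_le:
  fixes M :: "'a set \<Rightarrow> ('a set \<Rightarrow> real) \<Rightarrow> 'a ptree"
  assumes "recon_method M" "linf_safety_radius M n \<rho>" "0 < \<rho>" "0 < s" "0 \<le> \<eta>"
    and bound: "2 \<le> n \<Longrightarrow> failure_bound n \<rho> s \<le> \<eta>"
  shows "stochastic_safety_radius M \<eta> n s"
  unfolding stochastic_safety_radius_def
proof (intro allI impI, elim conjE)
  fix X :: "'a set" and T w c
  assume X: "finite X" "card X = n" and T: "binary_phylo_tree X T" "\<forall>e\<in>snd T. 0 < w e"
    and c: "0 < c" "ereal c < ereal s * wmin X T w"
  let ?tail = "2 * exp (-(\<rho>\<^sup>2 * ln (real n) / (2 * s\<^sup>2)))"
  have "real (card (pairs X)) * ?tail \<le> \<eta>"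
  proof (cases "pairs X = {}")
    case False
    have "real (card (pairs X)) \<le> real n ^ 2"
      using card_pairs_le[OF X(1)] X(2) by (simp flip: of_nat_power)
    then have "real (card (pairs X)) * ?tail \<le> failure_bound n \<rho> s"
      unfolding failure_bound_def by (intro mult_right_mono) auto
    then show ?thesis
      using bound two_le_card_if_pairs_nonempty[OF X(1) False] X(2) by simp
  qed (simp add: assms(5))
  then show "1 - \<eta> \<le> prob_correct M X T w c"
    using prob_correct_ge[OF assms(1-3) X T c(1) assms(4) c(2)] by linarith
qed

lemma exists_radius_failure_bound_le:
  assumes "0 < \<rho>" "0 < \<eta>"
  shows "\<exists>s>0. 2 \<le> n \<longrightarrow> failure_bound n \<rho> s \<le> \<eta>"
proof (cases "2 \<le> n")
  case True
  define K where "K = \<rho>\<^sup>2 * ln (real n) / 2"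
  have "0 < K" using assms True by (simp add: K_def)
  then have "((\<lambda>s. real n ^ 2 * (2 * exp (-(K / s\<^sup>2)))) \<longlongrightarrow> 0) (at_right 0)"
    by real_asymp
  then have "\<forall>\<^sub>F s in at_right 0. real n ^ 2 * (2 * exp (-(K / s\<^sup>2))) < \<eta>"
    using assms(2) by (rule order_tendstoD)
  then obtain b where b: "0 < b" "\<And>s. 0 < s \<Longrightarrow> s < b \<Longrightarrow> real n ^ 2 * (2 * exp (-(K / s\<^sup>2))) < \<eta>"
    by (auto simp: eventually_at_right_field)
  have "failure_bound n \<rho> s = real n ^ 2 * (2 * exp (-(K / s\<^sup>2)))" for s
    by (simp add: failure_bound_def K_def)
  then show ?thesis
    using b(1) b(2)[of "b / 2"] by (intro exI[of _ "b / 2"]) auto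
qed (use zero_less_one in blast)

lemma eventually_failure_bound_le:
  assumes "0 < \<eta>" "0 < \<theta>" "\<theta> < 1"
  shows "\<forall>\<^sub>F n in sequentially. \<forall>\<rho>>0. failure_bound n \<rho> (\<theta> * (\<rho> / 2)) \<le> \<eta>"
proof -
  define a where "a = 2 / \<theta>\<^sup>2 - 2"
  have "\<theta>\<^sup>2 < 1"
    using assms by (simp add: power_less_one_iff)
  then have "0 < a"
    using assms by (simp add: a_def field_simps)
  then have "((\<lambda>n. 2 * exp (- (a * ln (real n)))) \<longlongrightarrow> 0) sequentially"
    by real_asymp
  then have small: "\<forall>\<^sub>F n in sequentially. 2 * exp (- (a * ln (real n))) < \<eta>"
    using assms(1) by (rule order_tendstoD)
  have failure_eq: "failure_bound n \<rho> (\<theta> * (\<rho> / 2)) = 2 * exp (- (a * ln (real n)))"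
    if "0 < n" "0 < \<rho>" for n \<rho>
  proof -
    have "\<rho>\<^sup>2 * ln (real n) / (2 * (\<theta> * (\<rho> / 2))\<^sup>2) = 2 * ln (real n) / \<theta>\<^sup>2"
      using that(2) by (simp add: power2_eq_square field_simps)
    moreover have "2 * ln (real n) = ln (real n ^ 2)"
      by (simp add: ln_realpow)
    then have "real n ^ 2 = exp (2 * ln (real n))"
      using that(1) by simp
    moreover have "2 * ln (real n) + - (2 * ln (real n) / \<theta>\<^sup>2) = - (a * ln (real n))"
      by (simp add: a_def algebra_simps)
    ultimately show ?thesis
      unfolding failure_bound_def by (metis exp_add mult.left_commute)
  qed
  show ?thesis
    using small eventually_gt_at_top[of 0]
    by eventually_elim (auto simp only: failure_eq intro: less_imp_le)
qed

theorem proposition2: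
  fixes M :: "'a set \<Rightarrow> ('a set \<Rightarrow> real) \<Rightarrow> 'a ptree" and \<rho> :: "nat \<Rightarrow> real"
  assumes "recon_method M"
    and "\<And>n. 0 < \<rho> n"
    and "\<And>n. linf_safety_radius M n (\<rho> n)"
  shows "(\<forall>\<eta>>0. \<forall>n. \<exists>s>0. stochastic_safety_radius M \<eta> n s) \<and>
         (\<forall>\<eta>>0. \<forall>\<theta>. 0 < \<theta> \<and> \<theta> < 1 \<longrightarrow>
            (\<exists>N. \<forall>n\<ge>N. stochastic_safety_radius M \<eta> n (\<theta> * (\<rho> n / 2))))"
proof (intro conjI allI impI)
  fix \<eta> :: real and n :: nat
  assume "0 < \<eta>"
  then obtain s where "0 < s" "2 \<le> n \<longrightarrow> failure_bound n (\<rho> n) s \<le> \<eta>"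
    using exists_radius_failure_bound_le[OF assms(2)] by blast
  then show "\<exists>s>0. stochastic_safety_radius M \<eta> n s"
    using \<open>0 < \<eta>\<close> stochastic_safety_radius_if_failure_bound_le[OF assms(1,3,2)] by auto
next
  fix \<eta> \<theta> :: real
  assume "0 < \<eta>" and \<theta>: "0 < \<theta> \<and> \<theta> < 1"
  then obtain N where N: "\<And>n \<rho>. N \<le> n \<Longrightarrow> 0 < \<rho> \<Longrightarrow> failure_bound n \<rho> (\<theta> * (\<rho> / 2)) \<le> \<eta>"
    using eventually_failure_bound_le[of \<eta> \<theta>] by (auto simp: eventually_sequentially)
  have "stochastic_safety_radius M \<eta> n (\<theta> * (\<rho> n / 2))" if "N \<le> n" for n
    using N[OF that assms(2)] \<theta> \<open>0 < \<eta>\<close> assms(2)[of n]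
    by (intro stochastic_safety_radius_if_failure_bound_le[OF assms(1,3,2)]) auto
  then show "\<exists>N. \<forall>n\<ge>N. stochastic_safety_radius M \<eta> n (\<theta> * (\<rho> n / 2))"
    by blast
qed

end
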